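(* Let $G=(V,E)$ be a forest with $V=\{1,\dots,n\}$ and adjacency matrix $A$. Then $$\beta(G)=\min\{\mathbf{e}^\top x \mid x \text{ solves } \mathrm{LCP}(A+I,-\mathbf{e})\},$$ where $I$ is the $n\times n$ identity matrix and $\mathbf{e}$ is the all-ones vector in $\mathbb{R}^n$.
   Context: A forest is a simple graph (finite, undirected, no loops or multiple edges) with no cycles, i.e. a disjoint union of trees. Its adjacency matrix $A=[a_{ij}]$ has $a_{ij}=1$ iff $\{i,j\}\in E$. An independent set is maximal if it is not properly contained in another independent set; $\beta(G)$ denotes the minimum cardinality of a maximal independent set of $G$ (the independent domination number). A vector $x\in\mathbb{R}^n$ solves $\mathrm{LCP}(M,q)$ if $x\geq 0$, $Mx+q\geq 0$ and $x^\top(Mx+q)=0$. *)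

theory Defs
  imports Complex_Main
begin

definition simple_graph :: "nat \<Rightarrow> (nat \<Rightarrow> nat \<Rightarrow> bool) \<Rightarrow> bool" where
  "simple_graph n E \<longleftrightarrow>
     (\<forall>i j. E i j \<longrightarrow> i \<in> {1..n} \<and> j \<in> {1..n}) \<and>
     (\<forall>i j. E i j \<longrightarrow> E j i) \<and> (\<forall>i. \<not> E i i)"

definition is_cycle :: "(nat \<Rightarrow> nat \<Rightarrow> bool) \<Rightarrow> nat list \<Rightarrow> bool" where
  "is_cycle E vs \<longleftrightarrow> length vs \<ge> 3 \<and> distinct vs \<and>
     (\<forall>k < length vs - 1. E (vs ! k) (vs ! Suc k)) \<and> E (last vs) (hd vs)"

definition forest :: "nat \<Rightarrow> (nat \<Rightarrow> nat \<Rightarrow> bool) \<Rightarrow> bool" where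
  "forest n E \<longleftrightarrow> simple_graph n E \<and> (\<nexists>vs. is_cycle E vs)"

definition adj_matrix :: "(nat \<Rightarrow> nat \<Rightarrow> bool) \<Rightarrow> nat \<Rightarrow> nat \<Rightarrow> real" where
  "adj_matrix E i j = (if E i j then 1 else 0)"

definition independent_set :: "nat \<Rightarrow> (nat \<Rightarrow> nat \<Rightarrow> bool) \<Rightarrow> nat set \<Rightarrow> bool" where
  "independent_set n E S \<longleftrightarrow> S \<subseteq> {1..n} \<and> (\<forall>i\<in>S. \<forall>j\<in>S. \<not> E i j)"

definition maximal_independent_set :: "nat \<Rightarrow> (nat \<Rightarrow> nat \<Rightarrow> bool) \<Rightarrow> nat set \<Rightarrow> bool" where
  "maximal_independent_set n E S \<longleftrightarrow> independent_set n E S \<and>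
     (\<nexists>T. independent_set n E T \<and> S \<subset> T)"

definition indep_dom_number :: "nat \<Rightarrow> (nat \<Rightarrow> nat \<Rightarrow> bool) \<Rightarrow> nat" where
  "indep_dom_number n E = Min (card ` {S. maximal_independent_set n E S})"

definition solves_LCP :: "nat \<Rightarrow> (nat \<Rightarrow> nat \<Rightarrow> real) \<Rightarrow> (nat \<Rightarrow> real) \<Rightarrow> (nat \<Rightarrow> real) \<Rightarrow> bool" where
  "solves_LCP n M q x \<longleftrightarrow>
     (\<forall>i. i \<notin> {1..n} \<longrightarrow> x i = 0) \<and>
     (\<forall>i\<in>{1..n}. x i \<ge> 0) \<and>
     (\<forall>i\<in>{1..n}. (\<Sum>j=1..n. M i j * x j) + q i \<ge> 0) \<and>
     (\<Sum>i=1..n. x i * ((\<Sum>j=1..n. M i j * x j) + q i)) = 0"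

end

theory Submission
  imports Defs
begin

text \<open>Write N(x)_i for the sum of x over the neighbours of i. Then x solves LCP(A+I,-e)
  iff x \<ge> 0 and x_i + N(x)_i \<ge> 1, with equality wherever x_i > 0. The indicator vector of
  a maximal independent set is such a solution, and a 0/1 solution is the indicator vector
  of a maximal independent set, so the minimum over 0/1 solutions is \<beta>(G). It remains to
  round an arbitrary solution on a forest to a 0/1 solution of the same total weight. In a
  forest every vertex of the support has at most one neighbour in the support, so fractional
  vertices come in pairs u, v with x_u + x_v = 1; moving the weight of v onto u keeps x a
  solution unless some zero vertex adjacent to v loses its coverage, and acyclicity provides
  a pair for which this does not happen. Both uses of acyclicity exhibit a nonempty vertex
  set in which every vertex has two neighbours, and such a set contains a cycle.\<close>

definition is_path :: "(nat \<Rightarrow> nat \<Rightarrow> bool) \<Rightarrow> nat list \<Rightarrow> bool" where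
  "is_path E vs \<longleftrightarrow> vs \<noteq> [] \<and> distinct vs \<and> (\<forall>k < length vs - 1. E (vs ! k) (vs ! Suc k))"

lemma is_path_snoc:
  assumes p: "is_path E vs" and c: "c \<notin> set vs" "E (last vs) c"
  shows "is_path E (vs @ [c])"
  unfolding is_path_def
proof (intro conjI allI impI)
  fix k assume k: "k < length (vs @ [c]) - 1"
  have ne: "vs \<noteq> []" using p by (simp add: is_path_def)
  show "E ((vs @ [c]) ! k) ((vs @ [c]) ! Suc k)"
  proof (cases "Suc k < length vs")
    case True
    thus ?thesis using p by (simp add: is_path_def nth_append)
  next
    case False
    hence "k = length vs - 1" using k by simp
    thus ?thesis using c ne by (simp add: nth_append last_conv_nth)
  qed
qed (use p c in \<open>auto simp: is_path_def\<close>)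

lemma is_cycle_drop_is_path:
  assumes p: "is_path E vs" and k: "k + 3 \<le> length vs" and cl: "E (last vs) (vs ! k)"
  shows "is_cycle E (drop k vs)"
  unfolding is_cycle_def
proof (intro conjI)
  show "\<forall>i<length (drop k vs) - 1. E (drop k vs ! i) (drop k vs ! Suc i)"
    using p k by (auto simp: is_path_def nth_drop)
  show "E (last (drop k vs)) (hd (drop k vs))"
    using cl k by (simp add: hd_drop_conv_nth)
qed (use p k in \<open>auto simp: is_path_def\<close>)

text \<open>A longest path in U cannot be extended at its last vertex, so that vertex has a
  second neighbour on the path other than its predecessor, which closes a cycle.\<close>
lemma ex_cycle_if_min_degree_two:
  assumes irr: "\<And>i. \<not> E i i" and fin: "finite U" and ne: "U \<noteq> {}"
    and deg: "\<And>a. a \<in> U \<Longrightarrow> \<exists>b c. b \<noteq> c \<and> b \<in> U \<and> c \<in> U \<and> E a b \<and> E a c"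
  shows "\<exists>vs. is_cycle E vs"
proof -
  define P where "P vs \<longleftrightarrow> is_path E vs \<and> set vs \<subseteq> U" for vs
  obtain u0 where "u0 \<in> U" using ne by auto
  hence "P [u0]" by (simp add: P_def is_path_def)
  moreover have "length vs < card U + 1" if "P vs" for vs
  proof -
    have "length vs = card (set vs)" using that by (simp add: P_def is_path_def distinct_card)
    also have "\<dots> \<le> card U" using that card_mono[OF fin] by (simp add: P_def)
    finally show ?thesis by simp
  qed
  ultimately obtain vs where Pvs: "P vs" and longest: "\<And>ws. P ws \<Longrightarrow> length ws \<le> length vs"
    using ex_has_greatest_nat[of P "[u0]" length "card U + 1"] by blast
  have p: "is_path E vs" and sub: "set vs \<subseteq> U" using Pvs by (auto simp: P_def)
  have vs_ne: "vs \<noteq> []" using p by (simp add: is_path_def)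
  define a where "a = last vs"
  have "a \<in> U" using vs_ne sub a_def by auto
  then obtain b b' where bb': "b \<noteq> b'" "b \<in> U" "b' \<in> U" "E a b" "E a b'"
    using deg by blast
  define c where "c = (if b = vs ! (length vs - 2) then b' else b)"
  have cU: "c \<in> U" and Eac: "E a c" and not_pred: "c \<noteq> vs ! (length vs - 2)"
    using bb' by (auto simp: c_def)
  have "c \<in> set vs"
  proof (rule ccontr)
    assume "c \<notin> set vs"
    hence "P (vs @ [c])" using is_path_snoc[OF p] Eac cU sub by (simp add: P_def a_def)
    from longest[OF this] show False by simp
  qed
  then obtain k where k: "k < length vs" "vs ! k = c" by (metis in_set_conv_nth)
  have "c \<noteq> a" using Eac irr by metis
  hence "k \<noteq> length vs - 1" using k vs_ne by (auto simp: a_def last_conv_nth)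
  moreover have "k \<noteq> length vs - 2" using k not_pred by blast
  ultimately have "k + 3 \<le> length vs" using k by linarith
  thus ?thesis using is_cycle_drop_is_path[OF p] Eac k by (auto simp: a_def)
qed

lemma simple_graph_sym: "simple_graph n E \<Longrightarrow> E i j \<Longrightarrow> E j i"
  by (simp add: simple_graph_def)

lemma simple_graph_irrefl: "simple_graph n E \<Longrightarrow> \<not> E i i"
  by (simp add: simple_graph_def)

lemma forest_simple_graph: "forest n E \<Longrightarrow> simple_graph n E"
  by (simp add: forest_def)

lemma forest_no_min_degree_two:
  assumes "forest n E" "U \<subseteq> {1..n}" "U \<noteq> {}"
    "\<And>a. a \<in> U \<Longrightarrow> \<exists>b c. b \<noteq> c \<and> b \<in> U \<and> c \<in> U \<and> E a b \<and> E a c"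
  shows False
proof -
  have "\<And>i. \<not> E i i" using simple_graph_irrefl[OF forest_simple_graph[OF assms(1)]] .
  moreover have "finite U" using assms(2) finite_subset by blast
  ultimately obtain vs where "is_cycle E vs"
    using ex_cycle_if_min_degree_two[of E U] assms(3,4) by blast
  thus False using assms(1) by (simp add: forest_def)
qed

definition nbr_sum :: "nat \<Rightarrow> (nat \<Rightarrow> nat \<Rightarrow> bool) \<Rightarrow> (nat \<Rightarrow> real) \<Rightarrow> nat \<Rightarrow> real" where
  "nbr_sum n E x i = (\<Sum>j=1..n. adj_matrix E i j * x j)"

definition pos_nbrs :: "nat \<Rightarrow> (nat \<Rightarrow> nat \<Rightarrow> bool) \<Rightarrow> (nat \<Rightarrow> real) \<Rightarrow> nat \<Rightarrow> nat set" where
  "pos_nbrs n E x i = {j\<in>{1..n}. E i j \<and> 0 < x j}"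

definition lcp_solution :: "nat \<Rightarrow> (nat \<Rightarrow> nat \<Rightarrow> bool) \<Rightarrow> (nat \<Rightarrow> real) \<Rightarrow> bool" where
  "lcp_solution n E x \<longleftrightarrow> (\<forall>i. i \<notin> {1..n} \<longrightarrow> x i = 0) \<and> (\<forall>i\<in>{1..n}. 0 \<le> x i) \<and>
     (\<forall>i\<in>{1..n}. 1 \<le> x i + nbr_sum n E x i) \<and>
     (\<forall>i\<in>{1..n}. 0 < x i \<longrightarrow> x i + nbr_sum n E x i = 1)"

lemma sum_adj_plus_id:
  assumes "i \<in> {1..n}"
  shows "(\<Sum>j=1..n. (adj_matrix E i j + (if i = j then 1 else 0)) * x j) = x i + nbr_sum n E x i"
proof -
  have "(\<Sum>j=1..n. (adj_matrix E i j + (if i = j then 1 else 0)) * x j)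
      = nbr_sum n E x i + (\<Sum>j=1..n. if i = j then x j else 0)"
    unfolding nbr_sum_def
    by (subst sum.distrib[symmetric]) (rule sum.cong, auto simp: distrib_right)
  also have "(\<Sum>j=1..n. if i = j then x j else 0) = x i" using assms by (simp add: sum.delta)
  finally show ?thesis by simp
qed

text \<open>Given the sign constraints, the complementarity sum vanishes iff each of its
  nonnegative terms does.\<close>
lemma solves_LCP_iff_lcp_solution:
  "solves_LCP n (\<lambda>i j. adj_matrix E i j + (if i = j then 1 else 0)) (\<lambda>i. - 1) x
     \<longleftrightarrow> lcp_solution n E x"
proof -
  let ?w = "\<lambda>i. x i + nbr_sum n E x i - 1"
  have complementarity:
    "(\<Sum>i=1..n. x i * ((\<Sum>j=1..n. (adj_matrix E i j + (if i = j then 1 else 0)) * x j) + - 1))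
      = (\<Sum>i=1..n. x i * ?w i)"
    by (rule sum.cong) (simp_all add: sum_adj_plus_id del: One_nat_def)
  have "solves_LCP n (\<lambda>i j. adj_matrix E i j + (if i = j then 1 else 0)) (\<lambda>i. - 1) x \<longleftrightarrow>
      (\<forall>i. i \<notin> {1..n} \<longrightarrow> x i = 0) \<and> (\<forall>i\<in>{1..n}. 0 \<le> x i) \<and> (\<forall>i\<in>{1..n}. 0 \<le> ?w i) \<and>
      (\<Sum>i=1..n. x i * ?w i) = 0"
    unfolding solves_LCP_def complementarity by (simp add: sum_adj_plus_id[simplified])
  also have "\<dots> \<longleftrightarrow> (\<forall>i. i \<notin> {1..n} \<longrightarrow> x i = 0) \<and> (\<forall>i\<in>{1..n}. 0 \<le> x i) \<and>
      (\<forall>i\<in>{1..n}. 0 \<le> ?w i) \<and> (\<forall>i\<in>{1..n}. x i * ?w i = 0)"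
    by (intro conj_cong refl sum_nonneg_eq_0_iff) (auto intro!: mult_nonneg_nonneg)
  also have "\<dots> \<longleftrightarrow> lcp_solution n E x"
    unfolding lcp_solution_def by (auto simp: less_le)
  finally show ?thesis .
qed

lemma nbr_sum_eq_sum_pos_nbrs:
  assumes "\<forall>j\<in>{1..n}. 0 \<le> x j"
  shows "nbr_sum n E x i = sum x (pos_nbrs n E x i)"
  unfolding nbr_sum_def
proof (rule sum.mono_neutral_cong_right)
  show "\<forall>j\<in>{1..n} - pos_nbrs n E x i. adj_matrix E i j * x j = 0"
    using assms by (force simp: pos_nbrs_def adj_matrix_def)
qed (auto simp: pos_nbrs_def adj_matrix_def)

lemma member_le_sum_pos_nbrs: "j \<in> pos_nbrs n E x i \<Longrightarrow> x j \<le> sum x (pos_nbrs n E x i)"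
  by (rule member_le_sum) (auto simp: pos_nbrs_def)

lemma sum_pos_nbrs_nonneg: "0 \<le> sum x (pos_nbrs n E x i)"
  by (rule sum_nonneg) (simp add: pos_nbrs_def)

lemma lcp_solution_nonneg: "lcp_solution n E x \<Longrightarrow> 0 \<le> x i"
  by (cases "i \<in> {1..n}") (auto simp: lcp_solution_def)

lemma lcp_solution_covered:
  "lcp_solution n E x \<Longrightarrow> i \<in> {1..n} \<Longrightarrow> 1 \<le> x i + sum x (pos_nbrs n E x i)"
  using nbr_sum_eq_sum_pos_nbrs by (fastforce simp: lcp_solution_def)

lemma lcp_solution_tight:
  "lcp_solution n E x \<Longrightarrow> i \<in> {1..n} \<Longrightarrow> 0 < x i \<Longrightarrow> x i + sum x (pos_nbrs n E x i) = 1"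
  using nbr_sum_eq_sum_pos_nbrs by (fastforce simp: lcp_solution_def)

lemma lcp_solution_le_1:
  assumes "lcp_solution n E x"
  shows "x i \<le> 1"
proof (cases "i \<in> {1..n} \<and> 0 < x i")
  case True
  thus ?thesis using lcp_solution_tight[OF assms] sum_pos_nbrs_nonneg[of x n E i] by fastforce
qed (use assms in \<open>auto simp: lcp_solution_def\<close>)

text \<open>If a positive t has s as its only positive neighbour, then x_t + x_s = 1 leaves no
  weight for a second positive neighbour of s. So the positive vertices with two positive
  neighbours form a set in which every vertex has two neighbours.\<close>
lemma lcp_solution_pos_nbrs_unique:
  assumes F: "forest n E" and sol: "lcp_solution n E x"
    and a: "a \<in> {1..n}" "0 < x a" and bc: "b \<in> pos_nbrs n E x a" "c \<in> pos_nbrs n E x a"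
  shows "b = c"
proof (rule ccontr)
  assume "b \<noteq> c"
  define branching where
    "branching s \<longleftrightarrow> (\<exists>b c. b \<noteq> c \<and> b \<in> pos_nbrs n E x s \<and> c \<in> pos_nbrs n E x s)" for s
  define U where "U = {s\<in>{1..n}. 0 < x s \<and> branching s}"
  have "a \<in> U" using a bc \<open>b \<noteq> c\<close> by (auto simp: U_def branching_def)
  hence ne: "U \<noteq> {}" by blast
  have sub: "U \<subseteq> {1..n}" by (auto simp: U_def)
  have deg: "\<exists>b c. b \<noteq> c \<and> b \<in> U \<and> c \<in> U \<and> E s b \<and> E s c" if "s \<in> U" for s
  proof -
    have "branching s" using that by (simp add: U_def)
    then obtain b c where bc: "b \<noteq> c" "b \<in> pos_nbrs n E x s" "c \<in> pos_nbrs n E x s"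
      unfolding branching_def by blast
    have s: "s \<in> {1..n}" "0 < x s" using that by (simp_all add: U_def)
    have inU: "t \<in> U" if t: "t \<in> pos_nbrs n E x s" and t': "t' \<in> pos_nbrs n E x s" "t \<noteq> t'" for t t'
    proof (rule ccontr)
      assume "t \<notin> U"
      have tV: "t \<in> {1..n}" "0 < x t" "E s t" using t by (auto simp: pos_nbrs_def)
      have "s \<in> pos_nbrs n E x t"
        using s tV simple_graph_sym[OF forest_simple_graph[OF F]] by (auto simp: pos_nbrs_def)
      moreover have "\<not> branching t" using \<open>t \<notin> U\<close> tV by (simp add: U_def)
      ultimately have "pos_nbrs n E x t = {s}" unfolding branching_def by blast
      hence "x t + x s = 1" using lcp_solution_tight[OF sol tV(1,2)] by simp
      moreover have "x t + x t' \<le> sum x (pos_nbrs n E x s)"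
      proof -
        have "sum x {t, t'} \<le> sum x (pos_nbrs n E x s)"
          using t t' by (intro sum_mono2) (auto simp: pos_nbrs_def)
        thus ?thesis using t' by simp
      qed
      moreover have "x s + sum x (pos_nbrs n E x s) = 1" using lcp_solution_tight[OF sol s] .
      moreover have "0 < x t'" using t' by (simp add: pos_nbrs_def)
      ultimately show False by linarith
    qed
    have "b \<in> U" "c \<in> U" using inU[OF bc(2,3,1)] inU[OF bc(3,2)] bc(1) by auto
    moreover have "E s b" "E s c" using bc by (auto simp: pos_nbrs_def)
    ultimately show ?thesis using bc(1) by blast
  qed
  show False by (rule forest_no_min_degree_two[OF F sub ne deg])
qed

lemma lcp_solution_partner:
  assumes F: "forest n E" and sol: "lcp_solution n E x"
    and u: "u \<in> {1..n}" "0 < x u" "x u < 1"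
  obtains v where "pos_nbrs n E x u = {v}" "pos_nbrs n E x v = {u}" "x u + x v = 1"
proof -
  have "sum x (pos_nbrs n E x u) = 1 - x u" using lcp_solution_tight[OF sol u(1,2)] by simp
  with u have "pos_nbrs n E x u \<noteq> {}" by auto
  then obtain v where v: "v \<in> pos_nbrs n E x u" by blast
  hence pu: "pos_nbrs n E x u = {v}"
    using lcp_solution_pos_nbrs_unique[OF F sol u(1,2)] by blast
  hence uv: "x u + x v = 1" using lcp_solution_tight[OF sol u(1,2)] by simp
  have vV: "v \<in> {1..n}" "0 < x v" "E u v" using v by (auto simp: pos_nbrs_def)
  hence "u \<in> pos_nbrs n E x v"
    using u simple_graph_sym[OF forest_simple_graph[OF F]] by (auto simp: pos_nbrs_def)
  hence pv: "pos_nbrs n E x v = {u}"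
    using lcp_solution_pos_nbrs_unique[OF F sol vV(1,2)] by blast
  show thesis by (rule that[OF pu pv uv])
qed

definition fractional_vertices :: "nat \<Rightarrow> (nat \<Rightarrow> real) \<Rightarrow> nat set" where
  "fractional_vertices n x = {i\<in>{1..n}. 0 < x i \<and> x i < 1}"

lemma lcp_solution_two_fractional_nbrs:
  assumes sol: "lcp_solution n E x" and s: "s \<in> {1..n}" "x s = 0"
    and no_one: "\<forall>j\<in>{1..n}. E s j \<longrightarrow> x j \<noteq> 1"
  shows "\<exists>b c. b \<noteq> c \<and> b \<in> fractional_vertices n x \<and> c \<in> fractional_vertices n x \<and> E s b \<and> E s c"
proof -
  have covered: "1 \<le> sum x (pos_nbrs n E x s)" using lcp_solution_covered[OF sol s(1)] s(2) by simp
  have frac: "j \<in> fractional_vertices n x" if "j \<in> pos_nbrs n E x s" for j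
  proof -
    have "j \<in> {1..n}" "E s j" "0 < x j" using that by (auto simp: pos_nbrs_def)
    moreover have "x j \<noteq> 1" using no_one calculation by blast
    ultimately show ?thesis using lcp_solution_le_1[OF sol, of j] by (simp add: fractional_vertices_def)
  qed
  obtain b where b: "b \<in> pos_nbrs n E x s" using covered by fastforce
  have "\<exists>c\<in>pos_nbrs n E x s. c \<noteq> b"
  proof (rule ccontr)
    assume "\<not> ?thesis"
    hence "pos_nbrs n E x s = {b}" using b by blast
    thus False using covered frac[OF b] by (simp add: fractional_vertices_def)
  qed
  then obtain c where c: "c \<in> pos_nbrs n E x s" "c \<noteq> b" by blast
  show ?thesis using b c frac by (auto simp: pos_nbrs_def)
qed

lemma sum_mult_fun_upd:
  fixes x :: "'a \<Rightarrow> 'b::comm_ring_1"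
  assumes "finite A" "u \<in> A"
  shows "(\<Sum>j\<in>A. c j * (x(u := a)) j) = (\<Sum>j\<in>A. c j * x j) + c u * (a - x u)"
proof -
  have "(\<Sum>j\<in>A. c j * (x(u := a)) j) = (\<Sum>j\<in>A. c j * x j + (if j = u then c u * (a - x u) else 0))"
    by (rule sum.cong) (auto simp: algebra_simps)
  also have "\<dots> = (\<Sum>j\<in>A. c j * x j) + c u * (a - x u)"
    using assms by (simp add: sum.distrib)
  finally show ?thesis .
qed

lemma nbr_sum_fun_upd:
  "u \<in> {1..n} \<Longrightarrow> nbr_sum n E (x(u := a)) i = nbr_sum n E x i + adj_matrix E i u * (a - x u)"
  unfolding nbr_sum_def by (rule sum_mult_fun_upd) auto

lemma sum_fun_upd:
  fixes x :: "'a \<Rightarrow> 'b::comm_ring_1"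
  shows "finite A \<Longrightarrow> u \<in> A \<Longrightarrow> sum (x(u := a)) A = sum x A + (a - x u)"
  using sum_mult_fun_upd[of A u "\<lambda>_. 1" x a] by simp

lemma nbr_sum_shift:
  assumes "u \<in> {1..n}" "v \<in> {1..n}" "u \<noteq> v"
  shows "nbr_sum n E (x(u := 1, v := 0)) i
    = nbr_sum n E x i + adj_matrix E i u * (1 - x u) - adj_matrix E i v * x v"
  using nbr_sum_fun_upd[OF assms(1), of E x 1 i] nbr_sum_fun_upd[OF assms(2), of E "x(u := 1)" 0 i] assms(3)
  by simp

lemma lcp_solutionI:
  assumes "\<And>i. i \<notin> {1..n} \<Longrightarrow> x i = 0" and "\<And>i. i \<in> {1..n} \<Longrightarrow> 0 \<le> x i"
    and "\<And>i. i \<in> {1..n} \<Longrightarrow> 0 < x i \<Longrightarrow> x i + nbr_sum n E x i = 1"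
    and "\<And>i. i \<in> {1..n} \<Longrightarrow> x i = 0 \<Longrightarrow> 1 \<le> nbr_sum n E x i"
  shows "lcp_solution n E x"
  unfolding lcp_solution_def
proof (intro conjI ballI allI impI)
  fix i assume "i \<in> {1..n}"
  thus "1 \<le> x i + nbr_sum n E x i" using assms(2-4)[of i] by (cases "x i = 0") auto
qed (use assms in auto)

text \<open>Moving the weight of v onto u keeps u and v tight and leaves every other positive
  vertex untouched; only zero vertices next to v can lose coverage, which the last
  hypothesis excludes.\<close>
lemma lcp_solution_shift:
  assumes G: "simple_graph n E" and sol: "lcp_solution n E x"
    and u: "u \<in> {1..n}" "0 < x u"
    and pu: "pos_nbrs n E x u = {v}" and pv: "pos_nbrs n E x v = {u}" and uv: "x u + x v = 1"
    and cover: "\<And>w. w \<in> {1..n} \<Longrightarrow> x w = 0 \<Longrightarrow> E v w \<Longrightarrow> \<exists>j\<in>{1..n}. E w j \<and> x j = 1"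
  shows "lcp_solution n E (x(u := 1, v := 0))"
proof -
  let ?y = "x(u := 1, v := 0)"
  have v: "v \<in> {1..n}" "0 < x v" "E u v" using pu by (auto simp: pos_nbrs_def)
  have "u \<noteq> v" using v(3) simple_graph_irrefl[OF G] by metis
  have x_nonneg: "\<forall>j\<in>{1..n}. 0 \<le> x j" using lcp_solution_nonneg[OF sol] by blast
  have y_nonneg: "\<forall>j\<in>{1..n}. 0 \<le> ?y j" using x_nonneg by simp
  note nbr_sum_y = nbr_sum_shift[OF u(1) v(1) \<open>u \<noteq> v\<close>, of E x]
  have nbr_sum_x: "nbr_sum n E x i = sum x (pos_nbrs n E x i)" for i
    using nbr_sum_eq_sum_pos_nbrs[OF x_nonneg] .
  show ?thesis
  proof (rule lcp_solutionI)
    fix i assume i: "i \<in> {1..n}" and "0 < ?y i"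
    show "?y i + nbr_sum n E ?y i = 1"
    proof (cases "i = u")
      case True
      thus ?thesis using nbr_sum_y[of u] nbr_sum_x[of u] pu v(3) simple_graph_irrefl[OF G, of u]
          \<open>u \<noteq> v\<close> by (simp add: adj_matrix_def)
    next
      case False
      with \<open>0 < ?y i\<close> have "i \<noteq> v" "0 < x i" by (auto split: if_splits)
      hence "\<not> E i u" "\<not> E i v"
        using False i pu pv simple_graph_sym[OF G, of i] by (auto simp: pos_nbrs_def)
      thus ?thesis using False \<open>i \<noteq> v\<close> \<open>0 < x i\<close> nbr_sum_y[of i] lcp_solution_tight[OF sol i]
          nbr_sum_x[of i] by (simp add: adj_matrix_def)
    qed
  next
    fix i assume i: "i \<in> {1..n}" and "?y i = 0"
    show "1 \<le> nbr_sum n E ?y i"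
    proof (cases "i = v")
      case True
      thus ?thesis using nbr_sum_y[of v] nbr_sum_x[of v] pv uv simple_graph_irrefl[OF G, of v]
          simple_graph_sym[OF G v(3)] \<open>u \<noteq> v\<close> by (simp add: adj_matrix_def)
    next
      case False
      with \<open>?y i = 0\<close> have "i \<noteq> u" "x i = 0" by (auto split: if_splits)
      show ?thesis
      proof (cases "E i v")
        case True
        then obtain j where j: "j \<in> {1..n}" "E i j" "x j = 1"
          using cover[OF i \<open>x i = 0\<close>] simple_graph_sym[OF G] by blast
        have "j \<noteq> u" "j \<noteq> v" using j v uv u by auto
        hence "j \<in> pos_nbrs n E ?y i" using j by (simp add: pos_nbrs_def)
        hence "?y j \<le> nbr_sum n E ?y i"
          unfolding nbr_sum_eq_sum_pos_nbrs[OF y_nonneg] by (rule member_le_sum_pos_nbrs)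
        thus ?thesis using \<open>j \<noteq> u\<close> \<open>j \<noteq> v\<close> j by simp
      next
        case False
        thus ?thesis using nbr_sum_y[of i] lcp_solution_covered[OF sol i] nbr_sum_x[of i]
            \<open>x i = 0\<close> uv v(2) by (simp add: adj_matrix_def)
      qed
    qed
  qed (use u v sol y_nonneg in \<open>auto simp: lcp_solution_def\<close>)
qed

text \<open>Otherwise the fractional vertices together with the zero vertices without a neighbour
  of value 1 form a set in which every vertex has two neighbours: a fractional vertex is
  adjacent to its partner and to a zero vertex blocking the shift onto the partner, and a
  zero vertex can only be covered by two fractional neighbours.\<close>
lemma lcp_solution_ex_shiftable_pair:
  assumes F: "forest n E" and sol: "lcp_solution n E x" and frac: "fractional_vertices n x \<noteq> {}"
  obtains u v where "u \<in> fractional_vertices n x" "pos_nbrs n E x u = {v}" "pos_nbrs n E x v = {u}"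
    "x u + x v = 1" "\<And>w. w \<in> {1..n} \<Longrightarrow> x w = 0 \<Longrightarrow> E v w \<Longrightarrow> \<exists>j\<in>{1..n}. E w j \<and> x j = 1"
proof (rule ccontr)
  assume "\<not> thesis"
  note shiftable = that
  define W where "W = {w\<in>{1..n}. x w = 0 \<and> (\<forall>j\<in>{1..n}. E w j \<longrightarrow> x j \<noteq> 1)}"
  define U where "U = fractional_vertices n x \<union> W"
  have blocked: "\<exists>w\<in>W. E v w"
    if "u \<in> fractional_vertices n x" "pos_nbrs n E x u = {v}" "pos_nbrs n E x v = {u}" "x u + x v = 1"
    for u v
  proof (rule ccontr)
    assume "\<not> (\<exists>w\<in>W. E v w)"
    hence "\<exists>j\<in>{1..n}. E w j \<and> x j = 1" if "w \<in> {1..n}" "x w = 0" "E v w" for w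
      using that by (auto simp: W_def)
    thus False using shiftable[of u v] \<open>\<not> thesis\<close> that by blast
  qed
  have deg: "\<exists>b c. b \<noteq> c \<and> b \<in> U \<and> c \<in> U \<and> E s b \<and> E s c" if "s \<in> U" for s
  proof (cases "s \<in> fractional_vertices n x")
    case True
    hence s: "s \<in> {1..n}" "0 < x s" "x s < 1" by (simp_all add: fractional_vertices_def)
    obtain v where ps: "pos_nbrs n E x s = {v}" and pv: "pos_nbrs n E x v = {s}" and sv: "x s + x v = 1"
      using lcp_solution_partner[OF F sol s] .
    have v: "v \<in> {1..n}" "0 < x v" "E s v" using ps by (auto simp: pos_nbrs_def)
    hence vF: "v \<in> fractional_vertices n x" using s sv by (simp add: fractional_vertices_def)
    obtain w where "w \<in> W" "E s w" using blocked[OF vF pv ps] sv by (auto simp: algebra_simps)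
    moreover have "w \<noteq> v" using \<open>w \<in> W\<close> v by (auto simp: W_def)
    ultimately show ?thesis using vF v by (auto simp: U_def)
  next
    case False
    hence "s \<in> {1..n}" "x s = 0" "\<forall>j\<in>{1..n}. E s j \<longrightarrow> x j \<noteq> 1"
      using that by (simp_all add: U_def W_def)
    from lcp_solution_two_fractional_nbrs[OF sol this] show ?thesis unfolding U_def by blast
  qed
  have "U \<subseteq> {1..n}" by (auto simp: U_def W_def fractional_vertices_def)
  moreover have "U \<noteq> {}" using frac by (simp add: U_def)
  ultimately show False using forest_no_min_degree_two[OF F _ _ deg] by simp
qed

lemma finite_fractional_vertices [simp]: "finite (fractional_vertices n x)"
  by (simp add: fractional_vertices_def)

lemma lcp_solution_ex_integral:
  assumes F: "forest n E" and sol: "lcp_solution n E x"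
  shows "\<exists>y. lcp_solution n E y \<and> sum y {1..n} = sum x {1..n} \<and> fractional_vertices n y = {}"
  using sol
proof (induction "card (fractional_vertices n x)" arbitrary: x rule: less_induct)
  case less
  show ?case
  proof (cases "fractional_vertices n x = {}")
    case False
    then obtain u v where uF: "u \<in> fractional_vertices n x" and pu: "pos_nbrs n E x u = {v}"
      and pv: "pos_nbrs n E x v = {u}" and uv: "x u + x v = 1"
      and cover: "\<And>w. w \<in> {1..n} \<Longrightarrow> x w = 0 \<Longrightarrow> E v w \<Longrightarrow> \<exists>j\<in>{1..n}. E w j \<and> x j = 1"
      using lcp_solution_ex_shiftable_pair[OF F less.prems] by metis
    let ?y = "x(u := 1, v := 0)"
    have u: "u \<in> {1..n}" "0 < x u" using uF by (simp_all add: fractional_vertices_def)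
    have v: "v \<in> {1..n}" "E u v" using pu by (auto simp: pos_nbrs_def)
    have sol_y: "lcp_solution n E ?y"
      using lcp_solution_shift[OF forest_simple_graph[OF F] less.prems u pu pv uv cover] .
    have "u \<noteq> v" using v(2) simple_graph_irrefl[OF forest_simple_graph[OF F]] by metis
    hence sum_y: "sum ?y {1..n} = sum x {1..n}"
      using sum_fun_upd[of "{1..n}" u x 1] sum_fun_upd[of "{1..n}" v "x(u := 1)" 0] u v(1) uv by simp
    have "fractional_vertices n ?y \<subseteq> fractional_vertices n x - {u}"
    proof
      fix i assume i: "i \<in> fractional_vertices n ?y"
      have "i \<noteq> u" "i \<noteq> v" using i \<open>u \<noteq> v\<close> by (auto simp: fractional_vertices_def)
      thus "i \<in> fractional_vertices n x - {u}" using i by (simp add: fractional_vertices_def)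
    qed
    hence "fractional_vertices n ?y \<subset> fractional_vertices n x" using uF by blast
    hence "card (fractional_vertices n ?y) < card (fractional_vertices n x)"
      by (rule psubset_card_mono[OF finite_fractional_vertices])
    thus ?thesis using less.hyps sol_y sum_y by metis
  qed (use less.prems in blast)
qed

lemma maximal_independent_set_of_integral_lcp_solution:
  assumes sol: "lcp_solution n E x" and int: "fractional_vertices n x = {}"
  defines "S \<equiv> {i\<in>{1..n}. x i = 1}"
  shows "maximal_independent_set n E S" and "sum x {1..n} = card S"
proof -
  have binary: "x i = 0 \<or> x i = 1" if "i \<in> {1..n}" for i
  proof -
    have "i \<notin> fractional_vertices n x" using int by blast
    thus ?thesis using that lcp_solution_nonneg[OF sol, of i] lcp_solution_le_1[OF sol, of i]
      by (auto simp: fractional_vertices_def)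
  qed
  have indep: "independent_set n E S"
    unfolding independent_set_def
  proof (intro conjI ballI notI)
    fix a b assume a: "a \<in> S" and b: "b \<in> S" and "E a b"
    hence "b \<in> pos_nbrs n E x a" by (simp add: S_def pos_nbrs_def)
    hence "x b \<le> sum x (pos_nbrs n E x a)" by (rule member_le_sum_pos_nbrs)
    moreover have "x a + sum x (pos_nbrs n E x a) = 1"
      using a by (intro lcp_solution_tight[OF sol]) (simp_all add: S_def)
    ultimately show False using a b by (simp add: S_def)
  qed (auto simp: S_def)
  show "maximal_independent_set n E S"
    unfolding maximal_independent_set_def
  proof (intro conjI indep notI)
    assume "\<exists>T. independent_set n E T \<and> S \<subset> T"
    then obtain T t where T: "independent_set n E T" "S \<subseteq> T" and t: "t \<in> T" "t \<notin> S" by blast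
    have tV: "t \<in> {1..n}" using T(1) t(1) by (auto simp: independent_set_def)
    hence "x t = 0" using binary t(2) by (auto simp: S_def)
    hence "pos_nbrs n E x t \<noteq> {}" using lcp_solution_covered[OF sol tV] by auto
    then obtain j where j: "j \<in> pos_nbrs n E x t" by blast
    hence "j \<in> S" using binary by (force simp: pos_nbrs_def S_def)
    with j T t show False by (auto simp: independent_set_def pos_nbrs_def)
  qed
  have "S \<subseteq> {1..n}" by (auto simp: S_def)
  hence "sum x {1..n} = sum x ({1..n} - S) + sum x S" by (simp add: sum.subset_diff)
  also have "sum x ({1..n} - S) = 0"
  proof (intro sum.neutral ballI)
    fix i assume "i \<in> {1..n} - S"
    thus "x i = 0" using binary[of i] by (auto simp: S_def)
  qed
  also have "sum x S = sum (\<lambda>_. 1) S" by (rule sum.cong) (auto simp: S_def)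
  finally show "sum x {1..n} = card S" by simp
qed

lemma lcp_solution_indicator_of_maximal_independent_set:
  assumes G: "simple_graph n E" and S: "maximal_independent_set n E S"
  shows "lcp_solution n E (\<lambda>i. if i \<in> S then 1 else 0)"
    and "(\<Sum>i=1..n. if i \<in> S then 1 else 0 :: real) = card S"
proof -
  let ?x = "\<lambda>i. if i \<in> S then 1 else 0 :: real"
  have indep: "independent_set n E S" using S by (simp add: maximal_independent_set_def)
  hence SV: "S \<subseteq> {1..n}" by (simp add: independent_set_def)
  have nonneg: "\<forall>i\<in>{1..n}. 0 \<le> ?x i" by simp
  have tight: "nbr_sum n E ?x i = 0" if "i \<in> S" for i
    using that indep by (auto simp: nbr_sum_eq_sum_pos_nbrs[OF nonneg] pos_nbrs_def independent_set_def)
  have covered: "1 \<le> nbr_sum n E ?x i" if i: "i \<in> {1..n}" "i \<notin> S" for i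
  proof -
    have "\<not> independent_set n E (insert i S)" using S i by (auto simp: maximal_independent_set_def)
    then obtain j where "j \<in> S" "E i j"
      using indep i simple_graph_sym[OF G] simple_graph_irrefl[OF G] by (auto simp: independent_set_def)
    hence "j \<in> pos_nbrs n E ?x i" using SV by (auto simp: pos_nbrs_def)
    hence "?x j \<le> nbr_sum n E ?x i"
      unfolding nbr_sum_eq_sum_pos_nbrs[OF nonneg] by (rule member_le_sum_pos_nbrs)
    thus ?thesis using \<open>j \<in> S\<close> by simp
  qed
  show "lcp_solution n E ?x" using SV tight covered by (auto simp: lcp_solution_def)
  show "(\<Sum>i=1..n. ?x i) = card S" using SV by (simp add: sum.If_cases Int_absorb1)
qed

lemma finite_maximal_independent_sets: "finite {S. maximal_independent_set n E S}"
  by (rule finite_subset[of _ "Pow {1..n}"])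
    (auto simp: maximal_independent_set_def independent_set_def)

lemma ex_maximal_independent_set: "\<exists>S. maximal_independent_set n E S"
proof -
  have "independent_set n E {}" by (simp add: independent_set_def)
  moreover have "card T < n + 1" if "independent_set n E T" for T
    using that card_mono[of "{1..n}" T] by (auto simp: independent_set_def)
  ultimately obtain S where S: "independent_set n E S"
    and largest: "\<And>T. independent_set n E T \<Longrightarrow> card T \<le> card S"
    using ex_has_greatest_nat[of "independent_set n E" "{}" card "n + 1"] by blast
  have "\<not> S \<subset> T" if "independent_set n E T" for T
    using that largest[OF that] psubset_card_mono[of T S] finite_subset
    by (fastforce simp: independent_set_def)
  with S show ?thesis by (auto simp: maximal_independent_set_def)
qed

lemma indep_dom_number_le:
  "maximal_independent_set n E S \<Longrightarrow> indep_dom_number n E \<le> card S"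
  unfolding indep_dom_number_def using finite_maximal_independent_sets by (intro Min_le) auto

lemma indep_dom_number_attained:
  obtains S where "maximal_independent_set n E S" "card S = indep_dom_number n E"
proof -
  have "indep_dom_number n E \<in> card ` {S. maximal_independent_set n E S}"
    unfolding indep_dom_number_def using finite_maximal_independent_sets ex_maximal_independent_set
    by (intro Min_in) auto
  thus thesis using that by auto
qed

theorem theorem2:
  fixes n :: nat and E :: "nat \<Rightarrow> nat \<Rightarrow> bool"
  assumes "forest n E"
  defines "M \<equiv> (\<lambda>i j. adj_matrix E i j + (if i = j then 1 else 0))"
  defines "e \<equiv> (\<lambda>i::nat. 1::real)"
  shows "(\<exists>x. solves_LCP n M (\<lambda>i. - e i) x \<and>
            (\<Sum>i=1..n. e i * x i) = real (indep_dom_number n E)) \<and>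
         (\<forall>x. solves_LCP n M (\<lambda>i. - e i) x \<longrightarrow>
            real (indep_dom_number n E) \<le> (\<Sum>i=1..n. e i * x i))"
  unfolding M_def e_def
proof (simp only: solves_LCP_iff_lcp_solution mult_1, intro conjI allI impI)
  obtain S where S: "maximal_independent_set n E S" "card S = indep_dom_number n E"
    by (rule indep_dom_number_attained)
  note indicator = lcp_solution_indicator_of_maximal_independent_set[OF forest_simple_graph[OF assms(1)] S(1)]
  show "\<exists>x. lcp_solution n E x \<and> (\<Sum>i=1..n. x i) = real (indep_dom_number n E)"
    using indicator S(2) by auto
next
  fix x assume "lcp_solution n E x"
  then obtain y where y: "lcp_solution n E y" "sum y {1..n} = sum x {1..n}" "fractional_vertices n y = {}"
    using lcp_solution_ex_integral[OF assms(1)] by auto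
  let ?S = "{i\<in>{1..n}. y i = 1}"
  have "indep_dom_number n E \<le> card ?S"
    by (rule indep_dom_number_le[OF maximal_independent_set_of_integral_lcp_solution(1)[OF y(1,3)]])
  moreover have "sum y {1..n} = card ?S"
    by (rule maximal_independent_set_of_integral_lcp_solution(2)[OF y(1,3)])
  ultimately show "real (indep_dom_number n E) \<le> (\<Sum>i=1..n. x i)" using y(2) by simp
qed

end
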